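(* Let $q$ be a prime power, $k\ge1$ and $n\ge k+2$. There does not exist a Cameron-Liebler $k$-set of $\mathrm{AG}(n,q)$ with parameter $x=2$.
   Context: $\mathrm{AG}(n,q)$ is $\mathrm{PG}(n,q)$ with a hyperplane $\pi_\infty$ removed; affine points are points outside $\pi_\infty$, affine $k$-spaces are $k$-dimensional projective subspaces not contained in $\pi_\infty$. With $A_n$ the incidence matrix of affine points versus affine $k$-spaces, a set $\mathcal{L}$ of affine $k$-spaces is a Cameron-Liebler $k$-set of $\mathrm{AG}(n,q)$ if its characteristic vector lies in the real row space $\mathrm{Im}(A_n^T)$; its parameter is $|\mathcal{L}|/\left[{n\atop k}\right]_q$, where $\left[{a\atop b}\right]_q=\frac{(q^a-1)\cdots(q^{a-b+1}-1)}{(q^b-1)\cdots(q-1)}$. *)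

theory Defs
  imports "HOL-Analysis.Analysis"
begin

text \<open>Model of AG(n,q): the vector space 'a^'n over a finite field 'a with CARD('a) = q
  and CARD('n) = n.  Affine k-spaces are translates of k-dimensional linear subspaces.\<close>

definition affine_kspaces :: "nat \<Rightarrow> ('a::{field,finite} ^ 'n) set set" where
  "affine_kspaces k = {S. \<exists>v W. vec.subspace W \<and> vec.dim W = k \<and> S = (\<lambda>w. v + w) ` W}"

text \<open>Incidence matrix A_n: rows = affine points, columns = affine k-spaces.\<close>
definition incid :: "('a::{field,finite} ^ 'n) \<Rightarrow> ('a ^ 'n) set \<Rightarrow> real" where
  "incid P S = (if P \<in> S then 1 else 0)"

text \<open>Characteristic vector of L lies in the real row space Im(A_n^T) of A_n.\<close>
definition cameron_liebler_kset :: "nat \<Rightarrow> ('a::{field,finite} ^ 'n) set set \<Rightarrow> bool" where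
  "cameron_liebler_kset k L \<longleftrightarrow> L \<subseteq> affine_kspaces k \<and>
     (\<exists>c :: ('a ^ 'n) \<Rightarrow> real. \<forall>S \<in> affine_kspaces k.
        (if S \<in> L then 1 else 0) = (\<Sum>P\<in>UNIV. c P * incid P S))"

definition gauss_binom :: "nat \<Rightarrow> nat \<Rightarrow> nat \<Rightarrow> real" where
  "gauss_binom q a b = (\<Prod>i<b. (real q ^ (a - i) - 1) / (real q ^ (i + 1) - 1))"

definition cl_parameter :: "nat \<Rightarrow> ('a::{field,finite} ^ 'n) set set \<Rightarrow> real" where
  "cl_parameter k L = real (card L) / gauss_binom CARD('a) CARD('n) k"

end

theory Submission
  imports Defs
begin

(* Let c be a weighting of the points whose sums over the affine k-spaces give the characteristic
   vector of L.  If W is a k-subspace contained in a subspace X, the weight of a translate a + X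
   is the number of members of L parallel to W inside a + X.  For X the whole space this shows
   that every parallel class of k-spaces contains exactly x members of L, x the total weight;
   as there are [n choose k]_q linear k-subspaces, x is the parameter of L.

   Let x = 2, so a + X has weight 2 iff it contains both members of L parallel to each
   k-subspace W of X.  If p + W and r + W are these members, W and p - r span a (k+1)-space U
   and p + U has weight 2.  Doing this inside a (k+2)-space with a translate of weight 2, for
   two k-subspaces, gives distinct (k+1)-spaces U, U' with translates of weight 2, and U \<inter> U'
   is a k-space.  Both members of L parallel to U \<inter> U' lie in a translate of U and in one of
   U', so their offset lies in U \<inter> U' and they coincide: a contradiction. *)

section \<open>Subspaces of a finite-dimensional vector space\<close>

lemma (in finite_dimensional_vector_space) exists_subspace_between:
  assumes "subspace W" "subspace Y" "W \<subseteq> Y" "dim W \<le> m" "m \<le> dim Y"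
  obtains V where "subspace V" "dim V = m" "W \<subseteq> V" "V \<subseteq> Y"
proof -
  obtain B where B: "B \<subseteq> W" "independent B" "W \<subseteq> span B" "card B = dim W"
    using basis_exists by blast
  obtain C where C: "B \<subseteq> C" "C \<subseteq> Y" "independent C" "Y \<subseteq> span C"
    using maximal_independent_subset_extend[of B Y] B(1,2) assms(3) by blast
  have "card C = dim Y" using basis_card_eq_dim[OF C(2,4,3)] .
  moreover have "finite C" using C(3) finiteI_independent by blast
  ultimately have "m - card B \<le> card (C - B)"
    using C(1) B(4) assms(5) by (simp add: card_Diff_subset finite_subset)
  then obtain D where D: "D \<subseteq> C - B" "card D = m - card B"
    using obtain_subset_with_card_n by metis
  have indep: "independent (B \<union> D)" using C(1,3) D(1) independent_mono by blast
  have "card (B \<union> D) = m"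
    using D B(4) assms(4) \<open>finite C\<close> C(1) by (subst card_Un_disjoint) (auto intro: finite_subset)
  then have "dim (span (B \<union> D)) = m" using dim_span_eq_card_independent[OF indep] by simp
  moreover have "W \<subseteq> span (B \<union> D)" using B(3) span_mono[of B "B \<union> D"] by blast
  moreover have "span (B \<union> D) \<subseteq> Y"
    using assms(2,3) B(1) C(2) D(1) by (intro span_minimal) auto
  ultimately show ?thesis using that subspace_span by blast
qed

lemma (in finite_dimensional_vector_space) dim_Int_of_distinct_hyperplanes:
  assumes "subspace U" "subspace U'" "subspace Y" "U \<subseteq> Y" "U' \<subseteq> Y" "U \<noteq> U'"
    and "dim U = m + 1" "dim U' = m + 1" "dim Y = m + 2"
  shows "dim (U \<inter> U') = m"
proof -
  have "{x + y |x y. x \<in> U \<and> y \<in> U'} \<subseteq> Y"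
    using assms(3-5) subspace_add by blast
  then have "dim {x + y |x y. x \<in> U \<and> y \<in> U'} \<le> m + 2"
    using dim_subset[of _ Y] assms(9) by (metis (no_types, lifting))
  then have "m \<le> dim (U \<inter> U')"
    using dim_sums_Int[OF assms(1,2)] assms(7,8) by linarith
  moreover have "\<not> U \<subseteq> U'"
  proof
    assume "U \<subseteq> U'"
    then show False using subspace_dim_equal[OF assms(1,2)] assms(6-8) by simp
  qed
  then have "U \<inter> U' \<subset> U" by blast
  then have "span (U \<inter> U') \<subset> span U"
    using assms(1,2) by (metis span_eq_iff subspace_inter)
  then have "dim (U \<inter> U') < dim U"
    using dim_psubset by simp
  ultimately show ?thesis using assms(7) by linarith
qed

section \<open>Counting subspaces over a finite field\<close>

lemma two_le_card_field: "2 \<le> CARD('a::{field,finite})"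
proof -
  have "card {0::'a, 1} \<le> CARD('a)" by (rule card_mono) auto
  then show ?thesis by simp
qed

lemma card_span_independent:
  fixes B :: "('a::{field,finite}^'n) set"
  assumes "vec.independent B"
  shows "card (vec.span B) = CARD('a) ^ card B"
proof -
  have "finite B" by simp
  then show ?thesis using assms
  proof (induction B rule: finite_induct)
    case empty
    then show ?case by simp
  next
    case (insert x F)
    have indF: "vec.independent F" and xF: "x \<notin> vec.span F"
      using insert.prems insert.hyps by (auto simp: vec.independent_insert)
    let ?f = "\<lambda>(t, y). t *s x + y"
    have span_eq: "vec.span (insert x F) = ?f ` (UNIV \<times> vec.span F)"
    proof
      show "vec.span (insert x F) \<subseteq> ?f ` (UNIV \<times> vec.span F)"
      proof
        fix z assume "z \<in> vec.span (insert x F)"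
        then obtain t where "z - t *s x \<in> vec.span F" by (auto simp: vec.span_insert)
        then show "z \<in> ?f ` (UNIV \<times> vec.span F)"
          by (intro image_eqI[of _ _ "(t, z - t *s x)"]) auto
      qed
      show "?f ` (UNIV \<times> vec.span F) \<subseteq> vec.span (insert x F)"
        unfolding vec.span_insert by clarsimp (metis add_diff_cancel_left')
    qed
    have "inj_on ?f (UNIV \<times> vec.span F)"
    proof (rule inj_onI, clarsimp)
      fix t y t' y'
      assume y: "y \<in> vec.span F" and y': "y' \<in> vec.span F" and eq: "t *s x + y = t' *s x + y'"
      show "t = t' \<and> y = y'"
      proof (cases "t = t'")
        case True
        then show ?thesis using eq by simp
      next
        case False
        have diff: "(t - t') *s x = y' - y"
          using eq by (simp add: algebra_simps vector_sub_rdistrib)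
        have "x = (1 / (t - t')) *s ((t - t') *s x)"
          using False by (simp only: vec.scale_scale) simp
        also have "\<dots> = (1 / (t - t')) *s (y' - y)" by (simp only: diff)
        also have "\<dots> \<in> vec.span F" using y y' by (intro vec.span_scale vec.span_diff)
        finally show ?thesis using xF by simp
      qed
    qed
    then have "card (vec.span (insert x F)) = CARD('a) * card (vec.span F)"
      unfolding span_eq by (simp add: card_image card_cartesian_product)
    then show ?case using insert indF by simp
  qed
qed

lemma card_subspace:
  fixes W :: "('a::{field,finite}^'n) set"
  assumes "vec.subspace W"
  shows "card W = CARD('a) ^ vec.dim W"
proof -
  obtain B where B: "B \<subseteq> W" "vec.independent B" "W \<subseteq> vec.span B" "card B = vec.dim W"
    using vec.basis_exists by blast
  have "vec.span B = W" using B assms vec.span_minimal by blast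
  then show ?thesis using card_span_independent[OF B(2)] B(4) by simp
qed

definition independent_lists :: "('a::field^'n) set \<Rightarrow> nat \<Rightarrow> ('a^'n) list set" where
  "independent_lists W i =
     {xs. length xs = i \<and> set xs \<subseteq> W \<and> distinct xs \<and> vec.independent (set xs)}"

lemma finite_independent_lists: "finite (independent_lists (W :: ('a::{field,finite}^'n) set) i)"
proof -
  have "independent_lists W i \<subseteq> {xs. set xs \<subseteq> UNIV \<and> length xs = i}"
    by (auto simp: independent_lists_def)
  moreover have "finite {xs. set xs \<subseteq> (UNIV :: ('a^'n) set) \<and> length xs = i}"
    by (rule finite_lists_length_eq) simp
  ultimately show ?thesis by (rule finite_subset)
qed

lemma independent_lists_Suc:
  "independent_lists W (Suc i) =
     (\<Union>xs\<in>independent_lists W i. (\<lambda>v. v # xs) ` (W - vec.span (set xs)))"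
proof
  show "independent_lists W (Suc i)
          \<subseteq> (\<Union>xs\<in>independent_lists W i. (\<lambda>v. v # xs) ` (W - vec.span (set xs)))"
  proof
    fix ys assume ys: "ys \<in> independent_lists W (Suc i)"
    then obtain v xs where ys_eq: "ys = v # xs" by (cases ys) (auto simp: independent_lists_def)
    have "xs \<in> independent_lists W i"
      using ys ys_eq vec.independent_mono[of "set ys" "set xs"]
      by (auto simp: independent_lists_def)
    moreover have "v \<in> W - vec.span (set xs)"
      using ys ys_eq by (auto simp: independent_lists_def vec.independent_insert)
    ultimately show "ys \<in> (\<Union>xs\<in>independent_lists W i. (\<lambda>v. v # xs) ` (W - vec.span (set xs)))"
      using ys_eq by blast
  qed
  show "(\<Union>xs\<in>independent_lists W i. (\<lambda>v. v # xs) ` (W - vec.span (set xs)))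
          \<subseteq> independent_lists W (Suc i)"
  proof clarify
    fix xs v assume xs: "xs \<in> independent_lists W i" and v: "v \<in> W" "v \<notin> vec.span (set xs)"
    then have "v \<notin> set xs" using vec.span_base by blast
    then show "v # xs \<in> independent_lists W (Suc i)"
      using xs v by (auto simp: independent_lists_def vec.independent_insert)
  qed
qed

lemma card_independent_lists:
  fixes W :: "('a::{field,finite}^'n) set"
  assumes W: "vec.subspace W"
  shows "card (independent_lists W i) = (\<Prod>j<i. CARD('a) ^ vec.dim W - CARD('a) ^ j)"
proof (induction i)
  case 0
  have "independent_lists W 0 = {[]}" by (auto simp: independent_lists_def vec.independent_empty)
  then show ?case by simp
next
  case (Suc i)
  have card_extensions: "card ((\<lambda>v. v # xs) ` (W - vec.span (set xs)))
      = CARD('a) ^ vec.dim W - CARD('a) ^ i" if xs: "xs \<in> independent_lists W i" for xs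
  proof -
    have "vec.span (set xs) \<subseteq> W"
      using xs W vec.span_minimal[of "set xs" W] by (auto simp: independent_lists_def)
    then have "card (W - vec.span (set xs)) = card W - card (vec.span (set xs))"
      by (simp add: card_Diff_subset)
    moreover have "card (vec.span (set xs)) = CARD('a) ^ i"
      using xs card_span_independent[of "set xs"]
      by (auto simp: independent_lists_def distinct_card)
    ultimately show ?thesis
      using card_subspace[OF W] by (simp add: card_image inj_on_def)
  qed
  have "card (independent_lists W (Suc i))
      = (\<Sum>xs\<in>independent_lists W i. card ((\<lambda>v. v # xs) ` (W - vec.span (set xs))))"
    unfolding independent_lists_Suc
    by (rule card_UN_disjoint) (auto simp: finite_independent_lists)
  also have "\<dots> = card (independent_lists W i) * (CARD('a) ^ vec.dim W - CARD('a) ^ i)"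
    by (simp add: card_extensions)
  finally show ?case using Suc.IH by simp
qed

definition linear_kspaces :: "nat \<Rightarrow> ('a::field^'n) set set" where
  "linear_kspaces k = {W. vec.subspace W \<and> vec.dim W = k}"

lemma linear_kspaces_nonempty:
  assumes "k \<le> CARD('n)"
  shows "linear_kspaces k \<noteq> ({} :: ('a::field^'n) set set)"
proof -
  obtain W :: "('a^'n) set" where "vec.subspace W" "vec.dim W = k"
    by (rule vec.exists_subspace_between[OF vec.subspace_single_0 vec.subspace_UNIV subset_UNIV,
          of k])
      (use assms in \<open>auto simp: card_cart_basis\<close>)
  then show ?thesis by (auto simp: linear_kspaces_def)
qed

lemma span_eq_if_mem_independent_lists:
  assumes "W \<in> linear_kspaces k" "xs \<in> independent_lists W k"
  shows "vec.span (set xs) = W"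
proof -
  have "vec.span (set xs) \<subseteq> W"
    using assms vec.span_minimal[of "set xs" W]
    by (auto simp: independent_lists_def linear_kspaces_def)
  moreover have "vec.dim (vec.span (set xs)) = k"
    using assms by (auto simp: independent_lists_def distinct_card vec.dim_eq_card_independent)
  ultimately show ?thesis
    using assms vec.subspace_dim_equal[of "vec.span (set xs)" W] by (auto simp: linear_kspaces_def)
qed

lemma independent_lists_UNIV:
  "independent_lists (UNIV :: ('a::field^'n) set) k = (\<Union>W\<in>linear_kspaces k. independent_lists W k)"
proof
  show "independent_lists (UNIV :: ('a^'n) set) k \<subseteq> (\<Union>W\<in>linear_kspaces k. independent_lists W k)"
  proof
    fix xs assume xs: "xs \<in> independent_lists (UNIV :: ('a^'n) set) k"
    then have "vec.span (set xs) \<in> linear_kspaces k"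
      by (auto simp: independent_lists_def linear_kspaces_def distinct_card
          vec.dim_eq_card_independent)
    moreover have "xs \<in> independent_lists (vec.span (set xs)) k"
      using xs vec.span_superset by (auto simp: independent_lists_def)
    ultimately show "xs \<in> (\<Union>W\<in>linear_kspaces k. independent_lists W k)" by blast
  qed
qed (auto simp: independent_lists_def)

text \<open>Double counting of the pairs (W, ordered basis of W).\<close>
lemma card_linear_kspaces_mult:
  "card (linear_kspaces k :: ('a::{field,finite}^'n) set set) * (\<Prod>j<k. CARD('a) ^ k - CARD('a) ^ j)
     = (\<Prod>j<k. CARD('a) ^ CARD('n) - CARD('a) ^ j)"
proof -
  have "card (independent_lists (UNIV :: ('a^'n) set) k)
      = (\<Sum>W\<in>linear_kspaces k. card (independent_lists (W :: ('a^'n) set) k))"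
    unfolding independent_lists_UNIV
  proof (rule card_UN_disjoint)
    show "\<forall>W\<in>linear_kspaces k. \<forall>W'\<in>linear_kspaces k. (W :: ('a^'n) set) \<noteq> W' \<longrightarrow>
        independent_lists W k \<inter> independent_lists W' k = {}"
      using span_eq_if_mem_independent_lists by blast
  qed (simp_all add: finite_independent_lists)
  also have "\<dots> = card (linear_kspaces k :: ('a^'n) set set) * (\<Prod>j<k. CARD('a) ^ k - CARD('a) ^ j)"
    by (simp add: card_independent_lists linear_kspaces_def)
  finally show ?thesis
    using card_independent_lists[of "UNIV :: ('a^'n) set" k] by (simp add: card_cart_basis)
qed

lemma gauss_binom_eq_prod_ratio:
  assumes "0 < q" "k \<le> n"
  shows "gauss_binom q n k = (\<Prod>j<k. real q ^ n - real q ^ j) / (\<Prod>j<k. real q ^ k - real q ^ j)"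
proof -
  have factor: "(\<Prod>j<k. real q ^ m - real q ^ j) = (\<Prod>j<k. real q ^ j) * (\<Prod>j<k. real q ^ (m - j) - 1)"
    if "k \<le> m" for m
  proof -
    have "real q ^ m - real q ^ j = real q ^ j * (real q ^ (m - j) - 1)" if "j < k" for j
      using \<open>j < k\<close> \<open>k \<le> m\<close> by (simp add: right_diff_distrib flip: power_add)
    then show ?thesis by (simp add: prod.distrib[symmetric])
  qed
  have reverse: "(\<Prod>j<k. real q ^ (k - j) - 1) = (\<Prod>i<k. real q ^ (i + 1) - 1)"
    using prod.nat_diff_reindex[of "\<lambda>i. real q ^ (i + 1) - 1" k]
    by (simp add: Suc_diff_Suc lessThan_atLeast0)
  have "(\<Prod>j<k. real q ^ j) \<noteq> 0" using assms by simp
  with assms(1) show ?thesis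
    unfolding gauss_binom_def factor[OF assms(2)] factor[OF order_refl] reverse
    by (simp add: prod_dividef)
qed

lemma card_linear_kspaces:
  assumes "k \<le> CARD('n)"
  shows "real (card (linear_kspaces k :: ('a::{field,finite}^'n) set set))
    = gauss_binom CARD('a) CARD('n) k"
proof -
  let ?q = "real CARD('a)"
  have q: "2 \<le> ?q" using two_le_card_field[where 'a='a] by linarith
  have of_nat_prod_diff: "real (\<Prod>j<k. CARD('a) ^ m - CARD('a) ^ j) = (\<Prod>j<k. ?q ^ m - ?q ^ j)"
    if "k \<le> m" for m
  proof -
    have "CARD('a) ^ j \<le> CARD('a) ^ m" if "j < k" for j
      using \<open>j < k\<close> \<open>k \<le> m\<close> by (intro power_increasing) auto
    then show ?thesis by (simp add: of_nat_diff)
  qed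
  have "?q ^ j < ?q ^ k" if "j < k" for j
    using q that by (intro power_strict_increasing) auto
  then have "(\<Prod>j<k. ?q ^ k - ?q ^ j) \<noteq> 0" by (force simp: prod_zero_iff)
  moreover have "real (card (linear_kspaces k :: ('a^'n) set set)) * (\<Prod>j<k. ?q ^ k - ?q ^ j)
      = (\<Prod>j<k. ?q ^ CARD('n) - ?q ^ j)"
    using arg_cong[OF card_linear_kspaces_mult[where 'a='a and 'n='n and k=k], of real]
    by (simp only: of_nat_mult of_nat_prod_diff[OF order_refl] of_nat_prod_diff[OF assms])
  ultimately show ?thesis
    using gauss_binom_eq_prod_ratio[OF _ assms] by (simp add: field_simps)
qed

section \<open>Translates and parallel classes\<close>

lemma translation_subset_translation_iff:
  fixes W X :: "('a::field^'n) set"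
  assumes "vec.subspace W" "vec.subspace X" "W \<subseteq> X"
  shows "(+) v ` W \<subseteq> (+) u ` X \<longleftrightarrow> v - u \<in> X"
proof
  assume "(+) v ` W \<subseteq> (+) u ` X"
  moreover have "v \<in> (+) v ` W" using vec.subspace_0[OF assms(1)] by force
  ultimately show "v - u \<in> X" by auto
next
  assume vu: "v - u \<in> X"
  show "(+) v ` W \<subseteq> (+) u ` X"
  proof (rule image_subsetI)
    fix w assume "w \<in> W"
    then have "(v - u) + w \<in> X" using vu assms vec.subspace_add by blast
    moreover have "v + w = u + ((v - u) + w)" by simp
    ultimately show "v + w \<in> (+) u ` X" by blast
  qed
qed

lemma translation_eq_translation_iff:
  fixes W :: "('a::field^'n) set"
  assumes "vec.subspace W"
  shows "(+) v ` W = (+) u ` W \<longleftrightarrow> v - u \<in> W"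
proof -
  have "v - u \<in> W \<longleftrightarrow> u - v \<in> W"
    using vec.subspace_neg[OF assms] by (metis minus_diff_eq)
  then show ?thesis
    using translation_subset_translation_iff[OF assms assms order_refl] by blast
qed

definition parallel_class :: "('a::field^'n) set \<Rightarrow> ('a^'n) set set" where
  "parallel_class W = range (\<lambda>v. (+) v ` W)"

lemma eq_if_mem_parallel_classes:
  fixes W W' :: "('a::field^'n) set"
  assumes "vec.subspace W" "vec.subspace W'" "C \<in> parallel_class W" "C \<in> parallel_class W'"
  shows "W = W'"
proof -
  obtain u v where uv: "C = (+) u ` W" "C = (+) v ` W'"
    using assms(3,4) unfolding parallel_class_def by blast
  then have "u \<in> (+) v ` W'" using vec.subspace_0[OF assms(1)] by force
  then have "(+) u ` W' = (+) v ` W'"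
    using translation_eq_translation_iff[OF assms(2)] by auto
  then show ?thesis using uv translation_invert[of u W W'] by simp
qed

lemma parallel_class_disjoint:
  fixes W :: "('a::field^'n) set"
  assumes "vec.subspace W" "C \<in> parallel_class W" "C' \<in> parallel_class W" "C \<inter> C' \<noteq> {}"
  shows "C = C'"
proof -
  obtain u v where C: "C = (+) u ` W" and C': "C' = (+) v ` W"
    using assms(2,3) by (auto simp: parallel_class_def)
  then obtain w w' where "w \<in> W" "w' \<in> W" "u + w = v + w'" using assms(4) by auto
  then have "u - v = w' - w" by (simp add: algebra_simps)
  then have "u - v \<in> W" using vec.subspace_diff[OF assms(1)] \<open>w \<in> W\<close> \<open>w' \<in> W\<close> by simp
  then show ?thesis using C C' translation_eq_translation_iff[OF assms(1)] by blast
qed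

lemma translation_eq_Union_parallel_class:
  fixes W X :: "('a::field^'n) set"
  assumes "vec.subspace W" "vec.subspace X" "W \<subseteq> X"
  shows "(+) u ` X = \<Union>{C \<in> parallel_class W. C \<subseteq> (+) u ` X}"
proof
  show "(+) u ` X \<subseteq> \<Union>{C \<in> parallel_class W. C \<subseteq> (+) u ` X}"
  proof
    fix z assume "z \<in> (+) u ` X"
    then have "(+) z ` W \<subseteq> (+) u ` X"
      using translation_subset_translation_iff[OF assms] by auto
    moreover have "z \<in> (+) z ` W" using vec.subspace_0[OF assms(1)] by force
    ultimately show "z \<in> \<Union>{C \<in> parallel_class W. C \<subseteq> (+) u ` X}"
      by (auto simp: parallel_class_def)
  qed
qed blast

lemma affine_kspaces_eq_Union_parallel_class:
  "affine_kspaces k = (\<Union>W\<in>linear_kspaces k. parallel_class W)"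
  by (auto simp: affine_kspaces_def linear_kspaces_def parallel_class_def)

lemma diff_mem_of_translations_subset:
  fixes V U :: "('a::field^'n) set"
  assumes "vec.subspace V" "vec.subspace U" "V \<subseteq> U"
    and "(+) p ` V \<subseteq> (+) a ` U" "(+) r ` V \<subseteq> (+) a ` U"
  shows "p - r \<in> U"
proof -
  have "p - a \<in> U" "r - a \<in> U"
    using assms translation_subset_translation_iff[OF assms(1-3)] by auto
  then have "(p - a) - (r - a) \<in> U" by (rule vec.subspace_diff[OF assms(2)])
  then show ?thesis by simp
qed

section \<open>Weightings of Cameron-Liebler sets\<close>

locale cameron_liebler_weights =
  fixes k :: nat and L :: "('a::{field,finite}^'n) set set" and c :: "'a^'n \<Rightarrow> real"
  assumes indicator_eq_sum: "S \<in> affine_kspaces k \<Longrightarrow> (if S \<in> L then 1 else 0) = (\<Sum>P\<in>S. c P)"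
begin

lemma sum_translation_eq_card:
  assumes W: "W \<in> linear_kspaces k" and X: "vec.subspace X" "W \<subseteq> X"
  shows "(\<Sum>P\<in>(+) u ` X. c P) = card {C \<in> L \<inter> parallel_class W. C \<subseteq> (+) u ` X}"
proof -
  have Ws: "vec.subspace W" using W by (simp add: linear_kspaces_def)
  let ?D = "{C \<in> parallel_class W. C \<subseteq> (+) u ` X}"
  have "(\<Sum>P\<in>(+) u ` X. c P) = (\<Sum>P\<in>\<Union>?D. c P)"
    using translation_eq_Union_parallel_class[OF Ws X] by simp
  also have "\<dots> = (\<Sum>C\<in>?D. \<Sum>P\<in>C. c P)"
    using parallel_class_disjoint[OF Ws] by (subst sum.Union_disjoint) auto
  also have "\<dots> = (\<Sum>C\<in>?D. if C \<in> L then 1 else 0)"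
  proof (rule sum.cong[OF refl])
    fix C assume "C \<in> ?D"
    then have "C \<in> affine_kspaces k" using W affine_kspaces_eq_Union_parallel_class by blast
    then show "(\<Sum>P\<in>C. c P) = (if C \<in> L then 1 else 0)" by (rule indicator_eq_sum[symmetric])
  qed
  also have "\<dots> = (\<Sum>C\<in>{C \<in> ?D. C \<in> L}. 1)"
    by (rule sum.inter_filter[symmetric]) simp
  also have "\<dots> = card {C \<in> ?D. C \<in> L}"
    by simp
  also have "{C \<in> ?D. C \<in> L} = {C \<in> L \<inter> parallel_class W. C \<subseteq> (+) u ` X}"
    by blast
  finally show ?thesis .
qed

lemma card_Int_parallel_class:
  assumes "W \<in> linear_kspaces k"
  shows "card (L \<inter> parallel_class W) = (\<Sum>P\<in>UNIV. c P)"
  using sum_translation_eq_card[OF assms, of UNIV 0] by (simp add: Int_def)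

lemma card_eq_total_weight_mult:
  assumes "L \<subseteq> affine_kspaces k"
  shows "card L = (\<Sum>P\<in>UNIV. c P) * card (linear_kspaces k :: ('a^'n) set set)"
proof -
  have "L = (\<Union>W\<in>linear_kspaces k. L \<inter> parallel_class W)"
    using assms affine_kspaces_eq_Union_parallel_class by blast
  moreover have "card (\<Union>W\<in>linear_kspaces k. L \<inter> parallel_class W)
      = (\<Sum>W\<in>linear_kspaces k. card (L \<inter> parallel_class (W :: ('a^'n) set)))"
    by (rule card_UN_disjoint)
      (auto simp: linear_kspaces_def dest: eq_if_mem_parallel_classes)
  ultimately have "card L = (\<Sum>W\<in>linear_kspaces k. card (L \<inter> parallel_class W))"
    by simp
  then show ?thesis by (simp add: card_Int_parallel_class)
qed

lemma cl_parameter_eq_total_weight: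
  assumes "L \<subseteq> affine_kspaces k" "k \<le> CARD('n)"
  shows "cl_parameter k L = (\<Sum>P\<in>UNIV. c P)"
proof -
  have "card (linear_kspaces k :: ('a^'n) set set) \<noteq> 0"
    using linear_kspaces_nonempty[OF assms(2)] by simp
  then have "gauss_binom CARD('a) CARD('n) k \<noteq> 0"
    using card_linear_kspaces[OF assms(2), where 'a='a] by (metis of_nat_eq_0_iff)
  then show ?thesis
    using card_eq_total_weight_mult[OF assms(1)] card_linear_kspaces[OF assms(2), where 'a='a]
    by (simp add: cl_parameter_def)
qed

end

locale cameron_liebler_weights_two =
  cameron_liebler_weights k L c for k and L :: "('a::{field,finite}^'n) set set" and c +
  assumes total_weight: "(\<Sum>P\<in>UNIV. c P) = 2"
begin

lemma card_Int_parallel_class_eq_2: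
  assumes "W \<in> linear_kspaces k"
  shows "card (L \<inter> parallel_class W) = 2"
  using card_Int_parallel_class[OF assms] total_weight by simp

lemma parallel_class_Int_eq_pair:
  assumes "W \<in> linear_kspaces k"
  obtains p r where "L \<inter> parallel_class W = {(+) p ` W, (+) r ` W}" "p - r \<notin> W"
proof -
  obtain C C' where CC': "L \<inter> parallel_class W = {C, C'}" "C \<noteq> C'"
    using card_Int_parallel_class_eq_2[OF assms] by (meson card_2_iff)
  then have "C \<in> parallel_class W" "C' \<in> parallel_class W" by auto
  then obtain p r where pr: "C = (+) p ` W" "C' = (+) r ` W"
    unfolding parallel_class_def by blast
  have "vec.subspace W" using assms by (simp add: linear_kspaces_def)
  then have "p - r \<notin> W" using CC'(2) pr translation_eq_translation_iff by blast
  with CC'(1) pr show ?thesis by (intro that) simp_all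
qed

lemma sum_translation_eq_2_iff:
  assumes "W \<in> linear_kspaces k" "vec.subspace X" "W \<subseteq> X"
  shows "(\<Sum>P\<in>(+) a ` X. c P) = 2 \<longleftrightarrow> (\<forall>C \<in> L \<inter> parallel_class W. C \<subseteq> (+) a ` X)"
proof -
  let ?S = "{C \<in> L \<inter> parallel_class W. C \<subseteq> (+) a ` X}"
  have two: "card (L \<inter> parallel_class W) = 2" by (rule card_Int_parallel_class_eq_2[OF assms(1)])
  have "(\<Sum>P\<in>(+) a ` X. c P) = 2 \<longleftrightarrow> card ?S = 2"
    using sum_translation_eq_card[OF assms] by simp
  also have "\<dots> \<longleftrightarrow> ?S = L \<inter> parallel_class W"
  proof
    assume "card ?S = 2"
    then show "?S = L \<inter> parallel_class W" using two by (intro card_subset_eq) auto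
  qed (use two in simp)
  also have "\<dots> \<longleftrightarrow> (\<forall>C \<in> L \<inter> parallel_class W. C \<subseteq> (+) a ` X)" by blast
  finally show ?thesis .
qed

lemma parallel_members_diff_mem:
  assumes W: "W \<in> linear_kspaces k" and X: "vec.subspace X" "W \<subseteq> X"
    and weight: "(\<Sum>P\<in>(+) a ` X. c P) = 2"
    and pr: "L \<inter> parallel_class W = {(+) p ` W, (+) r ` W}"
  shows "p - r \<in> X"
proof -
  have "(+) p ` W \<subseteq> (+) a ` X" "(+) r ` W \<subseteq> (+) a ` X"
    using weight pr sum_translation_eq_2_iff[OF W X] by auto
  moreover have "vec.subspace W" using W by (simp add: linear_kspaces_def)
  ultimately show ?thesis using diff_mem_of_translations_subset X by blast
qed

lemma sum_translation_eq_2_mono: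
  assumes W: "W \<in> linear_kspaces k" and X: "vec.subspace X" "W \<subseteq> X"
    and X': "vec.subspace X'" "X \<subseteq> X'"
    and weight: "(\<Sum>P\<in>(+) a ` X. c P) = 2"
  shows "(\<Sum>P\<in>(+) a ` X'. c P) = 2"
proof -
  have "(+) a ` X \<subseteq> (+) a ` X'" using X'(2) by (rule image_mono)
  then have "\<forall>C \<in> L \<inter> parallel_class W. C \<subseteq> (+) a ` X'"
    using weight sum_translation_eq_2_iff[OF W X] by blast
  then show ?thesis using sum_translation_eq_2_iff[OF W X'(1)] X(2) X'(2) by blast
qed

lemma exists_weight_2_extension:
  assumes W: "W \<in> linear_kspaces k" and Y: "vec.subspace Y" "W \<subseteq> Y"
    and weight: "(\<Sum>P\<in>(+) a ` Y. c P) = 2"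
  obtains U p where "vec.subspace U" "vec.dim U = k + 1" "W \<subseteq> U" "U \<subseteq> Y"
    "(\<Sum>P\<in>(+) p ` U. c P) = 2"
proof -
  have Ws: "vec.subspace W" and Wd: "vec.dim W = k" using W by (auto simp: linear_kspaces_def)
  obtain p r where pr: "L \<inter> parallel_class W = {(+) p ` W, (+) r ` W}" "p - r \<notin> W"
    using parallel_class_Int_eq_pair[OF W] .
  have "p - r \<in> Y" using parallel_members_diff_mem[OF W Y weight pr(1)] .
  define U where "U = vec.span (insert (p - r) W)"
  have Us: "vec.subspace U" unfolding U_def by simp
  have WU: "W \<subseteq> U" unfolding U_def using vec.span_superset by blast
  have UY: "U \<subseteq> Y" unfolding U_def using Y \<open>p - r \<in> Y\<close> by (intro vec.span_minimal) auto
  have prU: "p - r \<in> U" unfolding U_def by (simp add: vec.span_base)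
  have "p - r \<notin> vec.span W" using pr(2) Ws by (metis vec.span_eq_iff)
  then have "vec.dim U = k + 1" using Wd by (simp add: U_def vec.dim_insert)
  moreover have "r - p \<in> U" using vec.subspace_neg[OF Us prU] by simp
  then have "(+) p ` W \<subseteq> (+) p ` U" "(+) r ` W \<subseteq> (+) p ` U"
    by (simp_all add: translation_subset_translation_iff[OF Ws Us WU] vec.subspace_0[OF Us])
  then have "(\<Sum>P\<in>(+) p ` U. c P) = 2"
    using sum_translation_eq_2_iff[OF W Us WU] pr(1) by simp
  ultimately show ?thesis using that Us WU UY by blast
qed

lemma weight_2_translations_Int_notin_linear_kspaces:
  assumes U: "vec.subspace U" "(\<Sum>P\<in>(+) a ` U. c P) = 2"
    and U': "vec.subspace U'" "(\<Sum>P\<in>(+) b ` U'. c P) = 2"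
  shows "U \<inter> U' \<notin> linear_kspaces k"
proof
  assume V: "U \<inter> U' \<in> linear_kspaces k"
  obtain p r where pr: "L \<inter> parallel_class (U \<inter> U') = {(+) p ` (U \<inter> U'), (+) r ` (U \<inter> U')}"
      "p - r \<notin> U \<inter> U'"
    using parallel_class_Int_eq_pair[OF V] .
  have "p - r \<in> U" using parallel_members_diff_mem[OF V U(1) _ U(2) pr(1)] by blast
  moreover have "p - r \<in> U'" using parallel_members_diff_mem[OF V U'(1) _ U'(2) pr(1)] by blast
  ultimately show False using pr(2) by blast
qed

lemma ambient_dim_lt:
  assumes "1 \<le> k"
  shows "CARD('n) < k + 2"
proof (rule ccontr)
  assume "\<not> CARD('n) < k + 2"
  then have n: "k + 2 \<le> CARD('n)" by simp
  then have dim_UNIV: "k + 2 \<le> vec.dim (UNIV :: ('a^'n) set)" by (simp add: card_cart_basis)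
  obtain W0 :: "('a^'n) set" where W0: "W0 \<in> linear_kspaces k"
    using linear_kspaces_nonempty[where 'a='a and 'n='n, of k] n by fastforce
  have "(\<Sum>P\<in>(+) 0 ` UNIV. c P) = 2" using total_weight by simp
  then obtain U p where U: "vec.subspace U" "vec.dim U = k + 1" "W0 \<subseteq> U"
      and weight_U: "(\<Sum>P\<in>(+) p ` U. c P) = 2"
    by (rule exists_weight_2_extension[OF W0 vec.subspace_UNIV subset_UNIV]) blast
  obtain Y where Y: "vec.subspace Y" "vec.dim Y = k + 2" "U \<subseteq> Y"
    using vec.exists_subspace_between[OF U(1) vec.subspace_UNIV subset_UNIV, of "k + 2"]
      U(2) dim_UNIV by auto
  have weight_Y: "(\<Sum>P\<in>(+) p ` Y. c P) = 2"
    by (rule sum_translation_eq_2_mono[OF W0 U(1) U(3) Y(1) Y(3) weight_U])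
  have "\<not> Y \<subseteq> U" using vec.dim_subset[of Y U] Y(2) U(2) by auto
  then obtain y where y: "y \<in> Y" "y \<notin> U" by blast
  have "vec.span {y} \<subseteq> Y" using y(1) Y(1) by (simp add: vec.span_minimal)
  moreover have "vec.dim (vec.span {y}) \<le> k" using assms by simp
  ultimately obtain W where W: "vec.subspace W" "vec.dim W = k" "vec.span {y} \<subseteq> W" "W \<subseteq> Y"
    using vec.exists_subspace_between[OF vec.subspace_span Y(1)] Y(2) by (metis le_add1)
  then have "W \<in> linear_kspaces k" by (simp add: linear_kspaces_def)
  then obtain U' p' where U': "vec.subspace U'" "vec.dim U' = k + 1" "W \<subseteq> U'" "U' \<subseteq> Y"
      and weight_U': "(\<Sum>P\<in>(+) p' ` U'. c P) = 2"
    by (rule exists_weight_2_extension[OF _ Y(1) W(4) weight_Y]) blast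
  have "y \<in> U'" using W(3) U'(3) vec.span_base[of y "{y}"] by blast
  then have "U \<noteq> U'" using y(2) by blast
  then have "vec.dim (U \<inter> U') = k"
    by (rule vec.dim_Int_of_distinct_hyperplanes[OF U(1) U'(1) Y(1) Y(3) U'(4) _ U(2) U'(2) Y(2)])
  then have "U \<inter> U' \<in> linear_kspaces k"
    using vec.subspace_inter[OF U(1) U'(1)] by (simp add: linear_kspaces_def)
  then show False
    using weight_2_translations_Int_notin_linear_kspaces[OF U(1) weight_U U'(1) weight_U']
    by contradiction
qed

end

theorem corollary6p16:
  fixes k :: nat
  assumes "k \<ge> 1" and "CARD('n::finite) \<ge> k + 2"
  shows "\<not> (\<exists>L :: ('a::{field,finite} ^ 'n) set set.
             cameron_liebler_kset k L \<and> cl_parameter k L = 2)"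
proof
  assume "\<exists>L :: ('a ^ 'n) set set. cameron_liebler_kset k L \<and> cl_parameter k L = 2"
  then obtain L :: "('a ^ 'n) set set" and c where L: "L \<subseteq> affine_kspaces k"
    and c: "\<forall>S\<in>affine_kspaces k. (if S \<in> L then 1 else 0) = (\<Sum>P\<in>UNIV. c P * incid P S)"
    and parameter: "cl_parameter k L = 2"
    unfolding cameron_liebler_kset_def by blast
  interpret cameron_liebler_weights k L c
    using c by unfold_locales (simp add: incid_def if_distrib sum.If_cases)
  have "(\<Sum>P\<in>UNIV. c P) = 2"
    using parameter cl_parameter_eq_total_weight[OF L] assms(2) by simp
  then interpret cameron_liebler_weights_two k L c by unfold_locales
  show False using ambient_dim_lt assms by simp
qed

end
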